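(* Fix $\omega>0$. For every $s\in\mathbb Z$, the reflection $(B,A)\mapsto(B,-A)$ maps each of the curves $\partial L_{s,+}$, $\partial L_{s,-}$ to itself if $s$ is even, and interchanges $\partial L_{s,+}$ and $\partial L_{s,-}$ if $s$ is odd. In particular, for every even $s$ the curves $\partial L_{s,\pm}$ are orthogonal to the $B$-axis at the growth point of $L_s$. The reflection $(B,A)\mapsto(-B,A)$ maps $\partial L_{s,\pm}$ onto $\partial L_{-s,\mp}$ for even $s$, and maps $\partial L_{s,\pm}$ onto $\partial L_{-s,\pm}$ for odd $s$.
   Context: For $(B,A)\in\mathbb R^2$ consider $\frac{d\varphi}{dt}=-\sin\varphi+B+A\cos\omega t$; with $\tau=\omega t$, $l=B/\omega$, $\mu=A/(2\omega)$ this gives the vector field $\dot\varphi=-\frac{\sin\varphi}{\omega}+l+2\mu\cos\tau$, $\dot\tau=1$ on the torus $\mathbb R^2/2\pi\mathbb Z^2$ with coordinates $(\varphi,\tau)$. The rotation number is $\rho(B,A;\omega)=\lim_{k\to+\infty}\varphi(2\pi k)/(2\pi k)$; for $s\in\mathbb Z$, $L_s=\{\rho=s\}\subset\mathbb R^2_{(B,A)}$ is the phase-lock area. The Poincaré map $h_{(B,A)}$ is the time-$2\pi$ flow map on the circle $\{\tau=0\}$. $\partial L_{s,\pm}$ denotes the set of points of $L_s$ at which $h_{(B,A)}$ fixes $\pm\frac\pi2\pmod{2\pi}$; it is known that $\partial L_s=\partial L_{s,+}\cup\partial L_{s,-}$ and each $\partial L_{s,\pm}$ is the graph of an analytic function $B=g_{s,\pm}(A)$.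 The growth point of $L_s$ is its intersection point with the $B$-axis $\{A=0\}$. *)

theory Defs
  imports "HOL-Analysis.Analysis"
begin

text \<open>Vector field on the torus in the time \<tau> = \<omega> t, with l = B/\<omega>, \<mu> = A/(2\<omega>):
  d\<phi>/d\<tau> = - sin \<phi> / \<omega> + l + 2 \<mu> cos \<tau>.\<close>
definition jvf :: "real \<Rightarrow> real \<Rightarrow> real \<Rightarrow> real \<Rightarrow> real \<Rightarrow> real" where
  "jvf \<omega> B A \<tau> \<phi> = - sin \<phi> / \<omega> + B / \<omega> + 2 * (A / (2 * \<omega>)) * cos \<tau>"

text \<open>The (lifted) solution with initial value x at \<tau> = 0 (unique, global).\<close>
definition jflow :: "real \<Rightarrow> real \<Rightarrow> real \<Rightarrow> real \<Rightarrow> real \<Rightarrow> real" where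
  "jflow \<omega> B A x = (THE \<phi>. \<phi> 0 = x \<and>
      (\<forall>t. (\<phi> has_real_derivative jvf \<omega> B A t (\<phi> t)) (at t)))"

definition rotnum :: "real \<Rightarrow> real \<Rightarrow> real \<Rightarrow> real" where
  "rotnum \<omega> B A = lim (\<lambda>k::nat. jflow \<omega> B A 0 (2 * pi * real k) / (2 * pi * real k))"

definition poincare :: "real \<Rightarrow> real \<Rightarrow> real \<Rightarrow> real \<Rightarrow> real" where
  "poincare \<omega> B A x = jflow \<omega> B A x (2 * pi)"

definition phase_lock :: "real \<Rightarrow> int \<Rightarrow> (real \<times> real) set" where
  "phase_lock \<omega> s = {(B, A). rotnum \<omega> B A = real_of_int s}"

text \<open>\<partial>L_{s,+} (sign = True) and \<partial>L_{s,-} (sign = False): points of L_s at which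
  the Poincare map fixes +-\<pi>/2 modulo 2\<pi>.\<close>
definition bdry :: "real \<Rightarrow> int \<Rightarrow> bool \<Rightarrow> (real \<times> real) set" where
  "bdry \<omega> s sg = {(B, A). (B, A) \<in> phase_lock \<omega> s \<and>
     (\<exists>k::int. poincare \<omega> B A (if sg then pi / 2 else - pi / 2)
                = (if sg then pi / 2 else - pi / 2) + 2 * pi * real_of_int k)}"

end

theory Submission
  imports Defs
begin

text \<open>
  Let \<open>x\<^sub>\<pm> = \<pm>\<pi>/2\<close> and let \<open>\<phi>\<close> be the solution with \<open>\<phi>(0) = x\<^sub>\<pm>\<close>. Since
  \<open>sin (2 x\<^sub>\<pm> - y) = sin y\<close> and \<open>cos\<close> is even, the equation is invariant under
  \<open>(\<tau>, \<phi>) \<mapsto> (-\<tau>, 2 x\<^sub>\<pm> - \<phi>)\<close>, so \<open>\<phi>(-\<tau>) = 2 x\<^sub>\<pm> - \<phi>(\<tau>)\<close>. If the Poincare map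
  fixes \<open>x\<^sub>\<pm>\<close> with \<open>\<phi>(2\<pi>) = x\<^sub>\<pm> + 2\<pi>s\<close>, evaluating at \<open>\<tau> = \<pi>\<close> gives
  \<open>\<phi>(\<pi>) = x\<^sub>\<pm> + \<pi>s\<close>. The time shift \<open>\<tau> \<mapsto> \<tau> + \<pi>\<close> turns the equation for \<open>(B, A)\<close> into
  the one for \<open>(B, -A)\<close>, and together with \<open>\<phi> \<mapsto> -\<phi>\<close> into the one for \<open>(-B, A)\<close>. The
  shifted solutions start at \<open>\<pm>(x\<^sub>\<pm> + \<pi>s)\<close>, which is \<open>x\<^sub>+\<close> or \<open>x\<^sub>-\<close> modulo \<open>2\<pi>\<close>
  according to the parity of \<open>s\<close>, and they are again periodic, with rotation number \<open>s\<close>, resp.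
  \<open>-s\<close>. For even \<open>s\<close> the curve \<open>B = g(A)\<close> is therefore symmetric under \<open>A \<mapsto> -A\<close>, so
  \<open>g'(0) = 0\<close>.

  The field is bounded and globally Lipschitz, which gives existence (Picard iteration) and
  uniqueness (Gronwall) of solutions, hence a flow that is monotone in the initial value.
  Monotonicity keeps every orbit within bounded distance of a periodic one, so a periodic orbit
  determines the rotation number.
\<close>

section \<open>Integrals from the origin\<close>

definition primitive0 :: "(real \<Rightarrow> real) \<Rightarrow> real \<Rightarrow> real" where
  "primitive0 g t = (if 0 \<le> t then integral {0..t} g else - integral {t..0} g)"

lemma integrable_on_continuous_UNIV:
  fixes g :: "real \<Rightarrow> real"
  shows "continuous_on UNIV g \<Longrightarrow> g integrable_on {a..b}"
  by (rule integrable_continuous_real, erule continuous_on_subset) auto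

lemma primitive0_eq_integral_diff:
  assumes g: "continuous_on UNIV g" and "-R \<le> u" "u \<le> R"
  shows "primitive0 g u = integral {-R..u} g - integral {-R..0} g"
proof (cases "0 \<le> u")
  case True
  then have "integral {-R..0} g + integral {0..u} g = integral {-R..u} g"
    using assms integrable_on_continuous_UNIV[OF g]
      Henstock_Kurzweil_Integration.integral_combine[where a="-R" and c=0 and b=u and f=g]
    by auto
  then show ?thesis using True by (simp add: primitive0_def)
next
  case False
  then have "integral {-R..u} g + integral {u..0} g = integral {-R..0} g"
    using assms integrable_on_continuous_UNIV[OF g]
      Henstock_Kurzweil_Integration.integral_combine[where a="-R" and c=u and b=0 and f=g]
    by auto
  then show ?thesis using False by (simp add: primitive0_def)
qed

lemma primitive0_has_real_derivative:
  assumes g: "continuous_on UNIV g"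
  shows "(primitive0 g has_real_derivative g t) (at t)"
proof -
  define R where "R = \<bar>t\<bar> + 1"
  have "((\<lambda>u. integral {-R..u} g) has_real_derivative g t) (at t within {-R..R})"
    by (rule integral_has_real_derivative) (auto intro: continuous_on_subset[OF g] simp: R_def)
  moreover have "at t within {-R..R} = at t"
    by (rule at_within_Icc_at) (auto simp: R_def)
  ultimately have "((\<lambda>u. integral {-R..u} g - integral {-R..0} g) has_real_derivative g t) (at t)"
    by (auto intro!: derivative_eq_intros)
  then show ?thesis
    by (rule has_field_derivative_transform_within_open[where S="{-R<..<R}"])
       (auto simp: R_def primitive0_eq_integral_diff[OF g, of "\<bar>t\<bar> + 1"])
qed

lemma primitive0_0 [simp]: "primitive0 g 0 = 0"
  by (simp add: primitive0_def)

lemma continuous_on_primitive0: "continuous_on UNIV g \<Longrightarrow> continuous_on UNIV (primitive0 g)"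
  by (meson DERIV_isCont primitive0_has_real_derivative continuous_at_imp_continuous_on)

lemma primitive0_diff:
  assumes "continuous_on UNIV g" "continuous_on UNIV h"
  shows "primitive0 g t - primitive0 h t = primitive0 (\<lambda>s. g s - h s) t"
  using assms by (auto simp: primitive0_def integral_diff integrable_on_continuous_UNIV)

lemma integral_exp_mult:
  fixes a b c :: real
  assumes "a \<le> b" "c \<noteq> 0"
  shows "integral {a..b} (\<lambda>s. exp (c * s)) = (exp (c * b) - exp (c * a)) / c"
proof -
  have "((\<lambda>s. exp (c * s)) has_integral (exp (c * b) / c - exp (c * a) / c)) {a..b}"
    using assms
    by (intro fundamental_theorem_of_calculus)
       (auto intro!: derivative_eq_intros
         simp: has_real_derivative_iff_has_vector_derivative[symmetric])
  then show ?thesis by (simp add: integral_unique diff_divide_distrib)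
qed

lemma abs_primitive0_le_exp:
  assumes g: "continuous_on UNIV g" and "c > 0" and bound: "\<And>s. \<bar>g s\<bar> \<le> K * exp (c * \<bar>s\<bar>)"
  shows "\<bar>primitive0 g t\<bar> \<le> K * (exp (c * \<bar>t\<bar>) - 1) / c"
proof (cases "0 \<le> t")
  case True
  have "\<bar>g s\<bar> \<le> K * exp (c * s)" if "0 \<le> s" for s
    using bound[of s] that by simp
  then have "norm (integral {0..t} g) \<le> integral {0..t} (\<lambda>s. K * exp (c * s))"
    by (intro integral_norm_bound_integral integrable_on_continuous_UNIV[OF g]
        integrable_continuous_real continuous_intros) auto
  also have "\<dots> = K * (exp (c * t) - 1) / c"
    using True \<open>c > 0\<close> by (simp add: integral_exp_mult)
  finally show ?thesis using True by (simp add: primitive0_def)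
next
  case False
  have "\<bar>g s\<bar> \<le> K * exp ((-c) * s)" if "s \<le> 0" for s
    using bound[of s] that by simp
  then have "norm (integral {t..0} g) \<le> integral {t..0} (\<lambda>s. K * exp ((-c) * s))"
    by (intro integral_norm_bound_integral integrable_on_continuous_UNIV[OF g]
        integrable_continuous_real continuous_intros) auto
  also have "\<dots> = K * (1 - exp (- c * t)) / (- c)"
    using False \<open>c > 0\<close> integral_exp_mult[of t 0 "-c"] by simp
  finally show ?thesis using False \<open>c > 0\<close> by (simp add: primitive0_def field_simps)
qed

section \<open>Uniqueness and existence of solutions\<close>

lemma ode_solution_unique_forward:
  fixes G :: "real \<Rightarrow> real \<Rightarrow> real"
  assumes lipschitz: "\<And>t y z. \<bar>G t y - G t z\<bar> \<le> L * \<bar>y - z\<bar>"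
    and f: "\<And>t. (f has_real_derivative G t (f t)) (at t)"
    and g: "\<And>t. (g has_real_derivative G t (g t)) (at t)"
    and "f t0 = g t0" "t0 \<le> t"
  shows "f t = g t"
proof -
  define d where "d u = f u - g u" for u
  define d' where "d' u = G u (f u) - G u (g u)" for u
  define e where "e u = (d u)\<^sup>2 * exp (- (2 * L) * u)" for u
  have d_d'_le: "d u * d' u \<le> L * (d u)\<^sup>2" for u
  proof -
    have "d u * d' u \<le> \<bar>d u\<bar> * \<bar>d' u\<bar>" by (simp add: abs_mult[symmetric])
    also have "\<dots> \<le> \<bar>d u\<bar> * (L * \<bar>d u\<bar>)"
      by (rule mult_left_mono) (auto simp: d'_def d_def lipschitz)
    finally show ?thesis by (simp add: power2_eq_square algebra_simps)
  qed
  have "(e has_real_derivative 2 * exp (- (2 * L) * u) * (d u * d' u - L * (d u)\<^sup>2)) (at u)" for u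
    unfolding e_def[abs_def] d_def[abs_def] d'_def
    by (auto intro!: derivative_eq_intros f g simp: power2_eq_square algebra_simps)
  moreover have "2 * exp (- (2 * L) * u) * (d u * d' u - L * (d u)\<^sup>2) \<le> 0" for u
    using d_d'_le[of u] by (simp add: mult_nonneg_nonpos)
  ultimately have "e t \<le> e t0"
    by (intro DERIV_nonpos_imp_nonincreasing[OF \<open>t0 \<le> t\<close>]) blast
  moreover have "e t0 = 0" using \<open>f t0 = g t0\<close> by (simp add: e_def d_def)
  ultimately have "(d t)\<^sup>2 \<le> 0" by (simp add: e_def mult_le_0_iff)
  then show ?thesis by (simp add: d_def)
qed

text \<open>The backward case is the forward case for the time-reversed field \<open>-G (-t) y\<close>.\<close>
lemma ode_solution_unique:
  fixes G :: "real \<Rightarrow> real \<Rightarrow> real"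
  assumes lipschitz: "\<And>t y z. \<bar>G t y - G t z\<bar> \<le> L * \<bar>y - z\<bar>"
    and f: "\<And>t. (f has_real_derivative G t (f t)) (at t)"
    and g: "\<And>t. (g has_real_derivative G t (g t)) (at t)"
    and "f t0 = g t0"
  shows "f t = g t"
proof (cases "t0 \<le> t")
  case True
  then show ?thesis using ode_solution_unique_forward[OF assms] by blast
next
  case False
  have reversed: "((\<lambda>u. h (- u)) has_real_derivative - G (- u) (h (- u))) (at u)"
    if "\<And>t. (h has_real_derivative G t (h t)) (at t)" for h u
    using DERIV_mirror[where f=h and x=u, THEN iffD1, OF that[of "- u"]] .
  have "\<bar>- G (- u) y - - G (- u) z\<bar> \<le> L * \<bar>y - z\<bar>" for u y z
    using lipschitz[of "- u" y z] by linarith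
  from ode_solution_unique_forward[OF this reversed[OF f] reversed[OF g], of "- t0" "- t"]
  show ?thesis using False \<open>f t0 = g t0\<close> by simp
qed

text \<open>In the variable \<open>\<psi> = \<phi> / weight\<close>, Picard's operator \<open>\<phi> \<mapsto> x + \<integral>\<^sub>0 G(s, \<phi> s) ds\<close>
  becomes a contraction with constant \<open>1/2\<close> in the supremum norm.\<close>
locale bounded_lipschitz_field =
  fixes G :: "real \<Rightarrow> real \<Rightarrow> real" and M L :: real
  assumes continuous: "continuous_on UNIV (\<lambda>(t, y). G t y)"
    and bounded: "\<And>t y. \<bar>G t y\<bar> \<le> M"
    and lipschitz: "\<And>t y z. \<bar>G t y - G t z\<bar> \<le> L * \<bar>y - z\<bar>"
    and L_pos: "L > 0"
begin

lemma M_nonneg: "M \<ge> 0"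
  using bounded[of 0 0] by simp

lemma continuous_on_field_along:
  assumes "continuous_on UNIV f"
  shows "continuous_on UNIV (\<lambda>t. G t (f t))"
proof -
  have "continuous_on UNIV (\<lambda>t. (t, f t))"
    using assms by (intro continuous_intros)
  from continuous_on_compose2[OF continuous this] show ?thesis by simp
qed

definition weight :: "real \<Rightarrow> real" where
  "weight t = exp (2 * L * \<bar>t\<bar>)"

definition picard :: "real \<Rightarrow> (real \<Rightarrow> real) \<Rightarrow> real \<Rightarrow> real" where
  "picard x \<psi> t = (x + primitive0 (\<lambda>s. G s (\<psi> s * weight s)) t) / weight t"

lemma weight_pos: "weight t > 0"
  by (simp add: weight_def)

lemma continuous_on_weight: "continuous_on UNIV weight"
  unfolding weight_def by (intro continuous_intros)

lemma continuous_on_field_along_weighted: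
  "continuous_on UNIV (\<lambda>s. G s (apply_bcontfun \<psi> s * weight s))"
  by (intro continuous_on_field_along continuous_intros continuous_on_weight) auto

lemma picard_bcontfun: "picard x (apply_bcontfun \<psi>) \<in> bcontfun"
proof (rule bcontfun_normI)
  show "continuous_on UNIV (picard x (apply_bcontfun \<psi>))"
    unfolding picard_def using weight_pos
    by (intro continuous_intros continuous_on_weight continuous_on_primitive0
        continuous_on_field_along_weighted) (auto simp: less_imp_neq[symmetric])
  fix t
  have "\<bar>G s y\<bar> \<le> M * weight s" for s y
  proof -
    have "1 \<le> weight s"
      using L_pos by (simp add: weight_def)
    then show ?thesis using bounded[of s y] mult_left_mono[of 1 "weight s" M] M_nonneg by simp
  qed
  then have "\<bar>primitive0 (\<lambda>s. G s (apply_bcontfun \<psi> s * weight s)) t\<bar>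
      \<le> M * (weight t - 1) / (2 * L)"
    using abs_primitive0_le_exp[OF continuous_on_field_along_weighted, where c="2 * L" and K=M]
      L_pos
    unfolding weight_def by (simp add: mult.assoc)
  also have "\<dots> \<le> M / (2 * L) * weight t"
    using L_pos M_nonneg by (simp add: divide_simps right_diff_distrib)
  finally have "\<bar>x + primitive0 (\<lambda>s. G s (apply_bcontfun \<psi> s * weight s)) t\<bar>
      \<le> \<bar>x\<bar> + M / (2 * L) * weight t"
    by linarith
  then have "norm (picard x (apply_bcontfun \<psi>) t) \<le> (\<bar>x\<bar> + M / (2 * L) * weight t) / weight t"
    using weight_pos[of t] by (simp add: picard_def divide_right_mono)
  also have "\<dots> = \<bar>x\<bar> / weight t + M / (2 * L)"
    using weight_pos[of t] by (simp add: add_divide_distrib)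
  also have "\<dots> \<le> \<bar>x\<bar> + M / (2 * L)"
    using weight_pos[of t] L_pos by (simp add: weight_def divide_le_eq mult_le_cancel_left1)
  finally show "norm (picard x (apply_bcontfun \<psi>) t) \<le> \<bar>x\<bar> + M / (2 * L)" .
qed

lemma picard_contraction:
  "\<bar>picard x (apply_bcontfun a) t - picard x (apply_bcontfun b) t\<bar> \<le> dist a b / 2"
proof -
  define g where "g \<psi> s = G s (apply_bcontfun \<psi> s * weight s)" for \<psi> s
  have "\<bar>g a s - g b s\<bar> \<le> (L * dist a b) * exp (2 * L * \<bar>s\<bar>)" for s
  proof -
    have "\<bar>g a s - g b s\<bar> \<le> L * \<bar>apply_bcontfun a s * weight s - apply_bcontfun b s * weight s\<bar>"
      unfolding g_def by (rule lipschitz)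
    also have "\<dots> = L * (\<bar>apply_bcontfun a s - apply_bcontfun b s\<bar> * weight s)"
      using weight_pos[of s] by (simp add: left_diff_distrib[symmetric] abs_mult)
    also have "\<dots> \<le> L * (dist a b * weight s)"
      using dist_bounded[of a s b] weight_pos[of s] L_pos unfolding dist_real_def
      by (intro mult_left_mono mult_right_mono) auto
    finally show ?thesis by (simp add: weight_def mult.assoc)
  qed
  then have "\<bar>primitive0 (\<lambda>s. g a s - g b s) t\<bar> \<le> (L * dist a b) * (weight t - 1) / (2 * L)"
    unfolding weight_def using L_pos continuous_on_field_along_weighted
    by (intro abs_primitive0_le_exp continuous_intros) (auto simp: g_def)
  also have "\<dots> \<le> dist a b / 2 * weight t"
    using L_pos zero_le_dist[of a b] by (simp add: divide_simps right_diff_distrib)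
  finally have "\<bar>primitive0 (g a) t - primitive0 (g b) t\<bar> \<le> dist a b / 2 * weight t"
    using primitive0_diff[of "g a" "g b"] continuous_on_field_along_weighted by (simp add: g_def)
  then show ?thesis
    using weight_pos[of t]
    by (simp add: picard_def g_def[abs_def] diff_divide_distrib[symmetric] divide_le_eq)
qed

lemma solution_exists: "\<exists>\<phi>. \<phi> 0 = x \<and> (\<forall>t. (\<phi> has_real_derivative G t (\<phi> t)) (at t))"
proof -
  define T where "T \<psi> = Bcontfun (picard x (apply_bcontfun \<psi>))" for \<psi>
  have T_apply: "apply_bcontfun (T \<psi>) = picard x (apply_bcontfun \<psi>)" for \<psi>
    unfolding T_def using picard_bcontfun by (simp add: Bcontfun_inverse)
  have "dist (T a) (T b) \<le> 1/2 * dist a b" for a b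
    using picard_contraction by (intro dist_bound) (simp add: T_apply dist_real_def)
  then obtain \<psi> where "T \<psi> = \<psi>"
    using banach_fix_type[of "1/2" T] by auto
  define g where "g = (\<lambda>s. G s (apply_bcontfun \<psi> s * weight s))"
  have "apply_bcontfun \<psi> t = (x + primitive0 g t) / weight t" for t
    using fun_cong[OF T_apply[of \<psi>, unfolded \<open>T \<psi> = \<psi>\<close>], of t]
    by (simp add: picard_def g_def)
  then have fixed: "apply_bcontfun \<psi> t * weight t = x + primitive0 g t" for t
    using weight_pos[of t] by (simp add: field_simps)
  have "g t = G t (x + primitive0 g t)" for t
    unfolding fixed[symmetric] by (simp add: g_def)
  moreover have "((\<lambda>t. x + primitive0 g t) has_real_derivative g t) (at t)" for t
    using DERIV_add[OF DERIV_const
        primitive0_has_real_derivative[OF continuous_on_field_along_weighted]]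
    by (simp add: g_def)
  ultimately show ?thesis
    by (intro exI[of _ "\<lambda>t. x + primitive0 g t"]) simp
qed

end

section \<open>The flow of the equation\<close>

lemma abs_sin_diff_le: "\<bar>sin y - sin z\<bar> \<le> \<bar>y - z\<bar>" for y z :: real
proof -
  have "\<bar>sin y - sin z\<bar> = 2 * \<bar>sin ((y - z) / 2)\<bar> * \<bar>cos ((y + z) / 2)\<bar>"
    by (simp add: sin_diff_sin abs_mult)
  also have "\<dots> \<le> 2 * \<bar>(y - z) / 2\<bar> * 1"
    by (intro mult_mono abs_sin_x_le_abs_x) auto
  finally show ?thesis by simp
qed

lemma jvf_eq_divide: "jvf \<omega> B A t y = (- sin y + B + A * cos t) / \<omega>"
  by (simp add: jvf_def divide_simps)

lemma jvf_bounded_lipschitz_field: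
  assumes "\<omega> > 0"
  shows "bounded_lipschitz_field (jvf \<omega> B A) ((1 + \<bar>B\<bar> + \<bar>A\<bar>) / \<omega>) (1 / \<omega>)"
proof
  have "(\<lambda>(t, y). jvf \<omega> B A t y)
      = (\<lambda>p. - sin (snd p) / \<omega> + B / \<omega> + 2 * (A / (2 * \<omega>)) * cos (fst p))"
    by (auto simp: jvf_def)
  then show "continuous_on UNIV (\<lambda>(t, y). jvf \<omega> B A t y)"
    using assms by (simp only:) (intro continuous_intros, auto)
  fix t y z
  have "\<bar>A * cos t\<bar> \<le> \<bar>A\<bar>"
    by (simp add: abs_mult mult_left_le)
  then have "\<bar>- sin y + B + A * cos t\<bar> \<le> 1 + \<bar>B\<bar> + \<bar>A\<bar>"
    using abs_sin_le_one[of y] by linarith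
  then show "\<bar>jvf \<omega> B A t y\<bar> \<le> (1 + \<bar>B\<bar> + \<bar>A\<bar>) / \<omega>"
    using assms by (simp add: jvf_eq_divide divide_right_mono)
  show "\<bar>jvf \<omega> B A t y - jvf \<omega> B A t z\<bar> \<le> 1 / \<omega> * \<bar>y - z\<bar>"
    using assms abs_sin_diff_le[of z y]
    by (simp add: jvf_eq_divide diff_divide_distrib[symmetric] divide_right_mono abs_minus_commute)
  show "1 / \<omega> > 0" using assms by simp
qed

definition jsolution :: "real \<Rightarrow> real \<Rightarrow> real \<Rightarrow> (real \<Rightarrow> real) \<Rightarrow> bool" where
  "jsolution \<omega> B A \<phi> \<longleftrightarrow> (\<forall>t. (\<phi> has_real_derivative jvf \<omega> B A t (\<phi> t)) (at t))"

lemma jsolution_unique: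
  assumes "\<omega> > 0" "jsolution \<omega> B A \<phi>" "jsolution \<omega> B A \<psi>" "\<phi> t0 = \<psi> t0"
  shows "\<phi> t = \<psi> t"
proof -
  have "\<And>t. (\<phi> has_real_derivative jvf \<omega> B A t (\<phi> t)) (at t)"
    "\<And>t. (\<psi> has_real_derivative jvf \<omega> B A t (\<psi> t)) (at t)"
    using assms(2,3) by (auto simp: jsolution_def)
  from ode_solution_unique[OF
      bounded_lipschitz_field.lipschitz[OF jvf_bounded_lipschitz_field[OF assms(1)]] this assms(4)]
  show ?thesis .
qed

lemma jflow_solution:
  assumes "\<omega> > 0"
  shows "jflow \<omega> B A x 0 = x \<and> jsolution \<omega> B A (jflow \<omega> B A x)"
proof -
  have "\<exists>!\<phi>. \<phi> 0 = x \<and> jsolution \<omega> B A \<phi>"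
  proof (rule ex_ex1I)
    show "\<exists>\<phi>. \<phi> 0 = x \<and> jsolution \<omega> B A \<phi>"
      using bounded_lipschitz_field.solution_exists[OF jvf_bounded_lipschitz_field[OF assms]]
      by (simp add: jsolution_def)
    show "\<phi> = \<psi>" if "\<phi> 0 = x \<and> jsolution \<omega> B A \<phi>" "\<psi> 0 = x \<and> jsolution \<omega> B A \<psi>" for \<phi> \<psi>
      using that jsolution_unique[OF assms, of B A \<phi> \<psi> 0] by auto
  qed
  then show ?thesis
    unfolding jflow_def jsolution_def[symmetric] by (rule theI')
qed

lemma jflow_0 [simp]: "\<omega> > 0 \<Longrightarrow> jflow \<omega> B A x 0 = x"
  using jflow_solution by blast

lemma jsolution_jflow: "\<omega> > 0 \<Longrightarrow> jsolution \<omega> B A (jflow \<omega> B A x)"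
  using jflow_solution by blast

lemma jflow_eqI:
  assumes "\<omega> > 0" "jsolution \<omega> B A \<phi>"
  shows "jflow \<omega> B A (\<phi> 0) t = \<phi> t"
proof -
  have "jsolution \<omega> B A (jflow \<omega> B A (\<phi> 0))"
    using jsolution_jflow[OF assms(1)] .
  from jsolution_unique[OF assms(1) this assms(2), of 0 t] show ?thesis
    using assms(1) by simp
qed

text \<open>The hypothesis has the exact shape produced by the chain rule, so the instances below
  spell out trivial factors \<open>1\<close> and summands \<open>0\<close>.\<close>
lemma jsolution_transform:
  assumes "jsolution \<omega> B A \<phi>"
    and field: "\<And>t y. \<sigma> * \<epsilon> * jvf \<omega> B A (\<epsilon> * t + h) y = jvf \<omega> B' A' t (c + \<sigma> * y)"
  shows "jsolution \<omega> B' A' (\<lambda>t. c + \<sigma> * \<phi> (\<epsilon> * t + h))"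
  unfolding jsolution_def
proof
  fix t
  have "((\<lambda>t. \<epsilon> * t + h) has_real_derivative \<epsilon>) (at t)"
    by (auto intro!: derivative_eq_intros)
  with assms(1) have "((\<lambda>t. \<phi> (\<epsilon> * t + h)) has_real_derivative
      jvf \<omega> B A (\<epsilon> * t + h) (\<phi> (\<epsilon> * t + h)) * \<epsilon>) (at t)"
    unfolding jsolution_def by (intro DERIV_chain2) auto
  then have "((\<lambda>t. c + \<sigma> * \<phi> (\<epsilon> * t + h)) has_real_derivative
      \<sigma> * \<epsilon> * jvf \<omega> B A (\<epsilon> * t + h) (\<phi> (\<epsilon> * t + h))) (at t)"
    by (auto intro!: derivative_eq_intros simp: mult_ac)
  then show "((\<lambda>t. c + \<sigma> * \<phi> (\<epsilon> * t + h)) has_real_derivative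
      jvf \<omega> B' A' t (c + \<sigma> * \<phi> (\<epsilon> * t + h))) (at t)"
    by (simp only: field)
qed

lemma jflow_transform:
  assumes "\<omega> > 0"
    and "\<And>t y. \<sigma> * \<epsilon> * jvf \<omega> B A (\<epsilon> * t + h) y = jvf \<omega> B' A' t (c + \<sigma> * y)"
  shows "jflow \<omega> B' A' (c + \<sigma> * jflow \<omega> B A x h) t = c + \<sigma> * jflow \<omega> B A x (\<epsilon> * t + h)"
  using jflow_eqI[OF assms(1) jsolution_transform[OF jsolution_jflow[OF assms(1)] assms(2)]] by simp

lemma jflow_add_2pi_int:
  assumes "\<omega> > 0"
  shows "jflow \<omega> B A (x + 2 * pi * of_int k) t = jflow \<omega> B A x t + 2 * pi * of_int k"
proof -
  have "sin (2 * pi * of_int k + y) = sin y" for y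
    by (simp add: sin_add)
  then have "1 * 1 * jvf \<omega> B A (1 * t + 0) y = jvf \<omega> B A t (2 * pi * of_int k + 1 * y)" for t y
    by (simp add: jvf_def)
  from jflow_transform[OF assms this] show ?thesis
    using assms by (simp add: add.commute)
qed

lemma jflow_add_2pi:
  assumes "\<omega> > 0"
  shows "jflow \<omega> B A x (t + 2 * pi) = jflow \<omega> B A (poincare \<omega> B A x) t"
proof -
  have "1 * 1 * jvf \<omega> B A (1 * t + 2 * pi) y = jvf \<omega> B A t (0 + 1 * y)" for t y
    by (simp add: jvf_def)
  from jflow_transform[OF assms this] show ?thesis
    by (simp add: poincare_def add.commute)
qed

lemma jflow_reflect_A:
  assumes "\<omega> > 0"
  shows "jflow \<omega> B (- A) (jflow \<omega> B A x pi) t = jflow \<omega> B A x (t + pi)"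
proof -
  have "1 * 1 * jvf \<omega> B A (1 * t + pi) y = jvf \<omega> B (- A) t (0 + 1 * y)" for t y
    by (simp add: jvf_def)
  from jflow_transform[OF assms this] show ?thesis by simp
qed

lemma jflow_reflect_B:
  assumes "\<omega> > 0"
  shows "jflow \<omega> (- B) A (- jflow \<omega> B A x pi) t = - jflow \<omega> B A x (t + pi)"
proof -
  have "(- 1) * 1 * jvf \<omega> B A (1 * t + pi) y = jvf \<omega> (- B) A t (0 + (- 1) * y)" for t y
    by (simp add: jvf_def)
  from jflow_transform[OF assms this] show ?thesis by simp
qed

lemma jflow_reverse:
  assumes "\<omega> > 0" and sin_reflect: "\<And>y. sin (2 * x - y) = sin y"
  shows "jflow \<omega> B A x (- t) = 2 * x - jflow \<omega> B A x t"
proof -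
  have "(- 1) * (- 1) * jvf \<omega> B A ((- 1) * t + 0) y = jvf \<omega> B A t (2 * x + (- 1) * y)" for t y
    by (simp add: jvf_def sin_reflect)
  from jflow_transform[OF assms(1) this, of x t] show ?thesis
    using assms(1) by simp
qed

section \<open>Periodic orbits and the rotation number\<close>

lemma continuous_on_jflow: "\<omega> > 0 \<Longrightarrow> continuous_on UNIV (jflow \<omega> B A x)"
  using jsolution_jflow[of \<omega> B A x] unfolding jsolution_def
  by (meson DERIV_isCont continuous_at_imp_continuous_on)

lemma poincare_add_2pi_int:
  "\<omega> > 0 \<Longrightarrow> poincare \<omega> B A (x + 2 * pi * of_int k) = poincare \<omega> B A x + 2 * pi * of_int k"
  by (simp add: poincare_def jflow_add_2pi_int)

lemma jflow_add_2pi_periodic: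
  assumes "\<omega> > 0" "poincare \<omega> B A x = x + 2 * pi * of_int k"
  shows "jflow \<omega> B A x (t + 2 * pi) = jflow \<omega> B A x t + 2 * pi * of_int k"
  using assms by (simp add: jflow_add_2pi jflow_add_2pi_int)

lemma jflow_mult_2pi_periodic:
  assumes "\<omega> > 0" "poincare \<omega> B A x = x + 2 * pi * of_int k"
  shows "jflow \<omega> B A x (2 * pi * real n) = x + 2 * pi * of_int k * real n"
proof (induction n)
  case 0
  then show ?case using assms(1) by simp
next
  case (Suc n)
  have "jflow \<omega> B A x (2 * pi * real (Suc n)) = jflow \<omega> B A x (2 * pi * real n + 2 * pi)"
    by (simp add: algebra_simps)
  also have "\<dots> = jflow \<omega> B A x (2 * pi * real n) + 2 * pi * of_int k"
    by (rule jflow_add_2pi_periodic[OF assms])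
  finally show ?case using Suc by (simp add: algebra_simps)
qed

text \<open>Two solutions that meet coincide, so solutions cannot cross.\<close>
lemma jflow_mono:
  assumes "\<omega> > 0" "x \<le> y"
  shows "jflow \<omega> B A x t \<le> jflow \<omega> B A y t"
proof (rule ccontr)
  assume crossed: "\<not> ?thesis"
  define h where "h u = jflow \<omega> B A y u - jflow \<omega> B A x u" for u
  have "continuous_on UNIV h"
    unfolding h_def using continuous_on_jflow[OF assms(1)] by (intro continuous_intros)
  moreover have "h 0 \<ge> 0" "h t < 0"
    using assms crossed by (auto simp: h_def)
  ultimately obtain u where "h u = 0"
    using IVT'[of h t 0 0] IVT2'[of h t 0 0] by (cases "0 \<le> t") (auto intro: continuous_on_subset)
  then have "jflow \<omega> B A y u = jflow \<omega> B A x u"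
    by (simp add: h_def)
  then have "jflow \<omega> B A y t = jflow \<omega> B A x t"
    by (rule jsolution_unique[OF assms(1) jsolution_jflow[OF assms(1)]
          jsolution_jflow[OF assms(1)]])
  with crossed show False by simp
qed

lemma abs_jflow_diff_jflow_0:
  assumes "\<omega> > 0"
  shows "\<bar>jflow \<omega> B A x t - jflow \<omega> B A 0 t\<bar> \<le> \<bar>x\<bar> + 2 * pi"
proof -
  define k where "k = \<lfloor>x / (2 * pi)\<rfloor>"
  have "of_int k \<le> x / (2 * pi)" "x / (2 * pi) \<le> of_int (k + 1)"
    using floor_correct[of "x / (2 * pi)"] unfolding k_def by linarith+
  then have "2 * pi * of_int k \<le> x" "x \<le> 2 * pi * of_int (k + 1)"
    using pi_gt_zero by (simp_all add: le_divide_eq divide_le_eq mult.commute)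
  then have "jflow \<omega> B A (0 + 2 * pi * of_int k) t \<le> jflow \<omega> B A x t"
    "jflow \<omega> B A x t \<le> jflow \<omega> B A (0 + 2 * pi * of_int (k + 1)) t"
    using jflow_mono[OF assms] by simp_all
  then have "jflow \<omega> B A 0 t + 2 * pi * of_int k \<le> jflow \<omega> B A x t"
    "jflow \<omega> B A x t \<le> jflow \<omega> B A 0 t + 2 * pi * of_int k + 2 * pi"
    by (simp_all only: jflow_add_2pi_int[OF assms]) (simp add: algebra_simps)
  with \<open>2 * pi * of_int k \<le> x\<close> \<open>x \<le> 2 * pi * of_int (k + 1)\<close> show ?thesis
    by (simp add: abs_le_iff algebra_simps) linarith
qed

text \<open>A periodic orbit determines the rotation number: every other orbit stays within bounded
  distance of it, by monotonicity of the flow.\<close>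
lemma rotnum_eq_of_periodic:
  assumes "\<omega> > 0" "poincare \<omega> B A x = x + 2 * pi * of_int k"
  shows "rotnum \<omega> B A = of_int k"
proof -
  define C where "C = 2 * \<bar>x\<bar> + 2 * pi"
  define J where "J n = jflow \<omega> B A 0 (2 * pi * real n)" for n
  have bound: "\<bar>J n - 2 * pi * of_int k * real n\<bar> \<le> C" for n
    using abs_jflow_diff_jflow_0[OF assms(1), of B A x "2 * pi * real n"]
      jflow_mult_2pi_periodic[OF assms, of n] abs_ge_self[of x] abs_ge_minus_self[of x]
    unfolding C_def J_def abs_le_iff by linarith
  have close: "\<bar>J n / (2 * pi * real n) - of_int k\<bar> \<le> C / (2 * pi) * (1 / real n)" if "n \<ge> 1" for n
  proof -
    have "J n / (2 * pi * real n) - of_int k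
        = (J n - 2 * pi * of_int k * real n) / (2 * pi * real n)"
      using that by (simp add: diff_divide_distrib)
    also have "\<bar>\<dots>\<bar> = \<bar>J n - 2 * pi * of_int k * real n\<bar> / (2 * pi * real n)"
      by (simp add: abs_mult)
    also have "\<dots> \<le> C / (2 * pi * real n)"
      using bound[of n] that by (intro divide_right_mono) auto
    finally show ?thesis by simp
  qed
  have "(\<lambda>n. J n / (2 * pi * real n) - of_int k) \<longlonglongrightarrow> 0"
  proof (rule Lim_null_comparison)
    show "\<forall>\<^sub>F n in sequentially.
        norm (J n / (2 * pi * real n) - of_int k) \<le> C / (2 * pi) * (1 / real n)"
      using close by (intro eventually_sequentiallyI[of 1]) simp
    show "(\<lambda>n. C / (2 * pi) * (1 / real n)) \<longlonglongrightarrow> 0"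
      by (rule tendsto_mult_right_zero[OF lim_inverse_n'])
  qed
  then have "(\<lambda>n. J n / (2 * pi * real n)) \<longlonglongrightarrow> of_int k"
    by (simp add: LIM_zero_iff)
  then show ?thesis
    unfolding rotnum_def J_def by (rule limI)
qed

section \<open>Symmetries of the boundaries of the phase-lock areas\<close>

definition bdry_point :: "bool \<Rightarrow> real" where
  "bdry_point sg = (if sg then pi / 2 else - pi / 2)"

lemma bdry_iff_poincare:
  assumes "\<omega> > 0"
  shows "(B, A) \<in> bdry \<omega> s sg \<longleftrightarrow>
    poincare \<omega> B A (bdry_point sg) = bdry_point sg + 2 * pi * of_int s"
proof
  assume "(B, A) \<in> bdry \<omega> s sg"
  then obtain k :: int where "rotnum \<omega> B A = of_int s"
    and k: "poincare \<omega> B A (bdry_point sg) = bdry_point sg + 2 * pi * of_int k"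
    unfolding bdry_def phase_lock_def bdry_point_def by auto
  moreover have "rotnum \<omega> B A = of_int k"
    using rotnum_eq_of_periodic[OF assms k] .
  ultimately show "poincare \<omega> B A (bdry_point sg) = bdry_point sg + 2 * pi * of_int s"
    by simp
next
  assume "poincare \<omega> B A (bdry_point sg) = bdry_point sg + 2 * pi * of_int s"
  with rotnum_eq_of_periodic[OF assms this] show "(B, A) \<in> bdry \<omega> s sg"
    unfolding bdry_def phase_lock_def bdry_point_def by auto
qed

lemma sin_2_bdry_point_minus: "sin (2 * bdry_point sg - y) = sin y"
  by (simp add: bdry_point_def sin_diff)

lemma jflow_bdry_point_pi:
  assumes "\<omega> > 0" "poincare \<omega> B A (bdry_point sg) = bdry_point sg + 2 * pi * of_int s"
  shows "jflow \<omega> B A (bdry_point sg) pi = bdry_point sg + pi * of_int s"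
proof -
  let ?\<phi> = "jflow \<omega> B A (bdry_point sg)"
  have "?\<phi> (- pi + 2 * pi) = ?\<phi> (- pi) + 2 * pi * of_int s"
    by (rule jflow_add_2pi_periodic[OF assms])
  also have "?\<phi> (- pi) = 2 * bdry_point sg - ?\<phi> pi"
    by (rule jflow_reverse[OF assms(1) sin_2_bdry_point_minus])
  finally show ?thesis by simp
qed

lemma poincare_reflect_A:
  assumes "\<omega> > 0" "poincare \<omega> B A x = x + 2 * pi * of_int k"
  shows "poincare \<omega> B (- A) (jflow \<omega> B A x pi) = jflow \<omega> B A x pi + 2 * pi * of_int k"
  using jflow_reflect_A[OF assms(1), of B A x "2 * pi"] jflow_add_2pi_periodic[OF assms, of pi]
  by (simp add: poincare_def add.commute)

lemma poincare_reflect_B: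
  assumes "\<omega> > 0" "poincare \<omega> B A x = x + 2 * pi * of_int k"
  shows "poincare \<omega> (- B) A (- jflow \<omega> B A x pi) = - jflow \<omega> B A x pi + 2 * pi * of_int (- k)"
  using jflow_reflect_B[OF assms(1), of B A x "2 * pi"] jflow_add_2pi_periodic[OF assms, of pi]
  by (simp add: poincare_def add.commute)

lemma bdry_point_add_pi_mult:
  "\<exists>m :: int. bdry_point sg + pi * of_int s = bdry_point (sg \<longleftrightarrow> even s) + 2 * pi * of_int m"
proof (cases "even s")
  case True
  then obtain j where "s = 2 * j" by blast
  with True show ?thesis by (intro exI[of _ j]) simp
next
  case False
  then obtain j where "s = 2 * j + 1" by (metis oddE)
  with False show ?thesis
    by (intro exI[of _ "if sg then j + 1 else j"]) (auto simp: bdry_point_def algebra_simps)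
qed

lemma poincare_bdry_point_add_pi_mult:
  assumes "\<omega> > 0" and periodic: "poincare \<omega> B A (bdry_point sg + pi * of_int s)
      = bdry_point sg + pi * of_int s + 2 * pi * of_int k"
  shows "poincare \<omega> B A (bdry_point (sg \<longleftrightarrow> even s))
      = bdry_point (sg \<longleftrightarrow> even s) + 2 * pi * of_int k"
proof -
  obtain m :: int
    where "bdry_point sg + pi * of_int s = bdry_point (sg \<longleftrightarrow> even s) + 2 * pi * of_int m"
    using bdry_point_add_pi_mult by blast
  with periodic show ?thesis
    by (simp add: poincare_add_2pi_int[OF assms(1)])
qed

lemma reflect_A_mem_bdry:
  assumes "\<omega> > 0" "(B, A) \<in> bdry \<omega> s sg"
  shows "(B, - A) \<in> bdry \<omega> s (sg \<longleftrightarrow> even s)"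
proof -
  have periodic: "poincare \<omega> B A (bdry_point sg) = bdry_point sg + 2 * pi * of_int s"
    using assms bdry_iff_poincare by blast
  have "poincare \<omega> B (- A) (bdry_point sg + pi * of_int s)
      = bdry_point sg + pi * of_int s + 2 * pi * of_int s"
    using poincare_reflect_A[OF assms(1) periodic] jflow_bdry_point_pi[OF assms(1) periodic] by simp
  from poincare_bdry_point_add_pi_mult[OF assms(1) this] show ?thesis
    using bdry_iff_poincare[OF assms(1)] by blast
qed

lemma reflect_B_mem_bdry:
  assumes "\<omega> > 0" "(B, A) \<in> bdry \<omega> s sg"
  shows "(- B, A) \<in> bdry \<omega> (- s) (sg \<longleftrightarrow> odd s)"
proof -
  have periodic: "poincare \<omega> B A (bdry_point sg) = bdry_point sg + 2 * pi * of_int s"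
    using assms bdry_iff_poincare by blast
  have "- bdry_point sg = bdry_point (\<not> sg)" "(\<not> sg \<longleftrightarrow> even s) \<longleftrightarrow> (sg \<longleftrightarrow> odd s)"
    by (auto simp: bdry_point_def)
  then have "poincare \<omega> (- B) A (bdry_point (\<not> sg) + pi * of_int (- s))
      = bdry_point (\<not> sg) + pi * of_int (- s) + 2 * pi * of_int (- s)"
    using poincare_reflect_B[OF assms(1) periodic] jflow_bdry_point_pi[OF assms(1) periodic] by simp
  from poincare_bdry_point_add_pi_mult[OF assms(1) this] show ?thesis
    using bdry_iff_poincare[OF assms(1)] \<open>(\<not> sg \<longleftrightarrow> even s) \<longleftrightarrow> (sg \<longleftrightarrow> odd s)\<close> by simp
qed

lemma image_eq_if_involution:
  assumes "\<And>p. f (f p) = p" "f ` S \<subseteq> T" "f ` T \<subseteq> S"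
  shows "f ` S = T"
proof
  show "T \<subseteq> f ` S"
  proof
    fix p assume "p \<in> T"
    then have "f p \<in> S" using assms(3) by blast
    then show "p \<in> f ` S" using assms(1)[of p] by (metis imageI)
  qed
qed (fact assms(2))

lemma bdry_reflect_A:
  assumes "\<omega> > 0"
  shows "(\<lambda>(B, A). (B, - A)) ` bdry \<omega> s sg = bdry \<omega> s (sg \<longleftrightarrow> even s)"
proof (rule image_eq_if_involution)
  show "(\<lambda>(B, A). (B, - A)) ((\<lambda>(B, A). (B, - A)) p) = p" for p :: "real \<times> real"
    by (cases p) simp
  show "(\<lambda>(B, A). (B, - A)) ` bdry \<omega> s sg \<subseteq> bdry \<omega> s (sg \<longleftrightarrow> even s)"
    using reflect_A_mem_bdry[OF assms] by auto
  show "(\<lambda>(B, A). (B, - A)) ` bdry \<omega> s (sg \<longleftrightarrow> even s) \<subseteq> bdry \<omega> s sg"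
    using reflect_A_mem_bdry[OF assms, of _ _ s "sg \<longleftrightarrow> even s"] by (cases sg; cases "even s") auto
qed

lemma bdry_reflect_B:
  assumes "\<omega> > 0"
  shows "(\<lambda>(B, A). (- B, A)) ` bdry \<omega> s sg = bdry \<omega> (- s) (sg \<longleftrightarrow> odd s)"
proof (rule image_eq_if_involution)
  show "(\<lambda>(B, A). (- B, A)) ((\<lambda>(B, A). (- B, A)) p) = p" for p :: "real \<times> real"
    by (cases p) simp
  show "(\<lambda>(B, A). (- B, A)) ` bdry \<omega> s sg \<subseteq> bdry \<omega> (- s) (sg \<longleftrightarrow> odd s)"
    using reflect_B_mem_bdry[OF assms] by auto
  show "(\<lambda>(B, A). (- B, A)) ` bdry \<omega> (- s) (sg \<longleftrightarrow> odd s) \<subseteq> bdry \<omega> s sg"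
    using reflect_B_mem_bdry[OF assms, of _ _ "- s" "sg \<longleftrightarrow> odd s"] by (cases sg; cases "even s") auto
qed

lemma bdry_graph_even:
  assumes "\<omega> > 0" "even s" and graph: "\<And>B A. (B, A) \<in> bdry \<omega> s sg \<longleftrightarrow> B = g A"
  shows "g (- A) = g A"
proof -
  have "(g A, A) \<in> bdry \<omega> s sg"
    using graph by simp
  then have "(g A, - A) \<in> bdry \<omega> s sg"
    using reflect_A_mem_bdry[OF assms(1)] assms(2) by fastforce
  then show ?thesis
    using graph[of "g A" "- A"] by simp
qed

lemma even_fun_has_real_derivative_0:
  fixes g :: "real \<Rightarrow> real"
  assumes even: "\<And>x. g (- x) = g x" and "g differentiable (at 0)"
  shows "(g has_real_derivative 0) (at 0)"
proof -
  define D where "D = deriv g 0"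
  have D: "(g has_real_derivative D) (at 0)"
    using assms(2) by (simp add: D_def DERIV_deriv_iff_real_differentiable)
  then have "((\<lambda>x. g (- x)) has_real_derivative - D) (at 0)"
    using DERIV_mirror[where f=g and x=0 and y=D] by simp
  then have "(g has_real_derivative - D) (at 0)"
    by (simp add: even)
  with D have "D = - D"
    by (rule DERIV_unique)
  with D show ?thesis by simp
qed

theorem theorem1p21:
  fixes \<omega> :: real and s :: int
  assumes "\<omega> > 0"
  shows "(even s \<longrightarrow> (\<forall>sg. (\<lambda>(B, A). (B, - A)) ` bdry \<omega> s sg = bdry \<omega> s sg))
       \<and> (odd s \<longrightarrow> (\<forall>sg. (\<lambda>(B, A). (B, - A)) ` bdry \<omega> s sg = bdry \<omega> s (\<not> sg)))
       \<and> (even s \<longrightarrow> (\<forall>sg (g :: real \<Rightarrow> real).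
             (\<forall>B A. (B, A) \<in> bdry \<omega> s sg \<longleftrightarrow> B = g A) \<and> g differentiable (at 0)
             \<longrightarrow> (g has_real_derivative 0) (at 0)))
       \<and> (even s \<longrightarrow> (\<forall>sg. (\<lambda>(B, A). (- B, A)) ` bdry \<omega> s sg = bdry \<omega> (- s) (\<not> sg)))
       \<and> (odd s \<longrightarrow> (\<forall>sg. (\<lambda>(B, A). (- B, A)) ` bdry \<omega> s sg = bdry \<omega> (- s) sg))"
proof -
  have deriv: "(g has_real_derivative 0) (at 0)"
    if "even s" "\<forall>B A. (B, A) \<in> bdry \<omega> s sg \<longleftrightarrow> B = g A" "g differentiable (at 0)" for sg g
  proof (rule even_fun_has_real_derivative_0)
    show "g (- A) = g A" for A
      using bdry_graph_even[OF assms that(1)] that(2) by blast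
  qed (fact that(3))
  show ?thesis
    unfolding bdry_reflect_A[OF assms] bdry_reflect_B[OF assms] using deriv by (simp; blast)
qed

end
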